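(* Let $G$ be a graph and let $v\in V(G)$. Then $v$ is Z-irrelevant (i.e., $v$ is not contained in any minimal zero forcing set of $G$) if and only if $v$ is not contained in any minimal fort of $G$.
   Context: Graphs are simple, finite, undirected, with nonempty vertex set; $N(v)$ denotes the open neighborhood of $v$. Zero forcing: starting from an initial set $B$ of blue vertices (all others white), repeatedly apply the color change rule: a blue vertex $u$ changes a white vertex $w$ to blue if $w$ is the only white neighbor of $u$. $B$ is a zero forcing set if eventually all vertices become blue. A minimal zero forcing set is a zero forcing set no proper subset of which is a zero forcing set. A nonempty set $F\subseteq V(G)$ is a fort if for every $v\in V(G)\setminus F$, $|N(v)\cap F|\neq 1$. A minimal fort is a fort that properly contains no other fort. *)

theory Defs
  imports Main
begin

definition simple_graph :: "'a set \<Rightarrow> ('a \<Rightarrow> 'a \<Rightarrow> bool) \<Rightarrow> bool" where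
  "simple_graph V E \<longleftrightarrow> finite V \<and> V \<noteq> {} \<and>
     (\<forall>u w. E u w \<longrightarrow> u \<in> V \<and> w \<in> V) \<and>
     (\<forall>u w. E u w \<longrightarrow> E w u) \<and> (\<forall>u. \<not> E u u)"

definition nbhd :: "'a set \<Rightarrow> ('a \<Rightarrow> 'a \<Rightarrow> bool) \<Rightarrow> 'a \<Rightarrow> 'a set" where
  "nbhd V E v = {u \<in> V. E v u}"

text \<open>One application of the colour change rule: S is the current blue set,
a blue vertex u whose only white neighbour is w turns w blue.\<close>
definition zf_step :: "'a set \<Rightarrow> ('a \<Rightarrow> 'a \<Rightarrow> bool) \<Rightarrow> 'a set \<Rightarrow> 'a set \<Rightarrow> bool" where
  "zf_step V E S S' \<longleftrightarrow> (\<exists>u w. u \<in> S \<and> w \<in> V - S \<and> nbhd V E u - S = {w} \<and> S' = insert w S)"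

definition zero_forcing_set :: "'a set \<Rightarrow> ('a \<Rightarrow> 'a \<Rightarrow> bool) \<Rightarrow> 'a set \<Rightarrow> bool" where
  "zero_forcing_set V E B \<longleftrightarrow> B \<subseteq> V \<and> (zf_step V E)\<^sup>*\<^sup>* B V"

definition minimal_zero_forcing_set :: "'a set \<Rightarrow> ('a \<Rightarrow> 'a \<Rightarrow> bool) \<Rightarrow> 'a set \<Rightarrow> bool" where
  "minimal_zero_forcing_set V E B \<longleftrightarrow> zero_forcing_set V E B \<and>
     (\<forall>B'. B' \<subset> B \<longrightarrow> \<not> zero_forcing_set V E B')"

definition fort :: "'a set \<Rightarrow> ('a \<Rightarrow> 'a \<Rightarrow> bool) \<Rightarrow> 'a set \<Rightarrow> bool" where
  "fort V E F \<longleftrightarrow> F \<noteq> {} \<and> F \<subseteq> V \<and> (\<forall>v \<in> V - F. card (nbhd V E v \<inter> F) \<noteq> 1)"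

definition minimal_fort :: "'a set \<Rightarrow> ('a \<Rightarrow> 'a \<Rightarrow> bool) \<Rightarrow> 'a set \<Rightarrow> bool" where
  "minimal_fort V E F \<longleftrightarrow> fort V E F \<and> (\<forall>F'. F' \<subset> F \<longrightarrow> \<not> fort V E F')"

definition Z_irrelevant :: "'a set \<Rightarrow> ('a \<Rightarrow> 'a \<Rightarrow> bool) \<Rightarrow> 'a \<Rightarrow> bool" where
  "Z_irrelevant V E v \<longleftrightarrow> \<not> (\<exists>B. minimal_zero_forcing_set V E B \<and> v \<in> B)"

end

theory Submission
  imports Defs
begin

text \<open>A set is zero forcing exactly when it meets every fort: a force never enters a fort
from outside, since the forcing vertex would have exactly one neighbour in it; conversely the
white vertices of a stalled colouring form a fort. Given a minimal fort F containing v, the set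
(V - F) \<union> {v} meets every fort, and any minimal zero forcing set inside it must still meet F,
hence contain v. Given a minimal zero forcing set B containing v, the set B - {v} misses some
fort, and a minimal fort inside it must still meet B, hence contain v.\<close>

lemma exists_minimal_subset:
  assumes "finite V" and "P S" and "\<And>S. P S \<Longrightarrow> S \<subseteq> V"
  shows "\<exists>S'. S' \<subseteq> S \<and> P S' \<and> (\<forall>S''. S'' \<subset> S' \<longrightarrow> \<not> P S'')"
proof -
  let ?C = "{S'. P S' \<and> S' \<subseteq> S}"
  have "finite ?C"
    by (rule finite_subset[of _ "Pow V"]) (use assms in auto)
  then obtain M where M: "M \<in> ?C" and minimal: "\<forall>S'\<in>?C. S' \<subseteq> M \<longrightarrow> M = S'"
    using finite_has_minimal[of ?C] assms(2) by blast
  have "\<not> P S''" if "S'' \<subset> M" for S''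
    using that M minimal by blast
  with M show ?thesis by blast
qed

lemma fort_has_minimal_fort:
  assumes "simple_graph V E" and "fort V E F"
  shows "\<exists>F'. F' \<subseteq> F \<and> minimal_fort V E F'"
proof -
  have "finite V" using assms(1) unfolding simple_graph_def by blast
  moreover have "F' \<subseteq> V" if "fort V E F'" for F'
    using that unfolding fort_def by blast
  ultimately show ?thesis
    using exists_minimal_subset[of V "fort V E" F] assms(2) unfolding minimal_fort_def by blast
qed

lemma zero_forcing_set_has_minimal:
  assumes "simple_graph V E" and "zero_forcing_set V E B"
  shows "\<exists>B'. B' \<subseteq> B \<and> minimal_zero_forcing_set V E B'"
proof -
  have "finite V" using assms(1) unfolding simple_graph_def by blast
  moreover have "B' \<subseteq> V" if "zero_forcing_set V E B'" for B'
    using that unfolding zero_forcing_set_def by blast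
  ultimately show ?thesis
    using exists_minimal_subset[of V "zero_forcing_set V E" B] assms(2)
    unfolding minimal_zero_forcing_set_def by blast
qed

lemma zf_steps_avoid_fort:
  assumes "fort V E F" and "(zf_step V E)\<^sup>*\<^sup>* B S" and "B \<subseteq> V - F"
  shows "S \<subseteq> V - F"
  using assms(2)
proof (induction rule: rtranclp_induct)
  case base
  show ?case using assms(3) .
next
  case (step S S')
  then obtain u w where u: "u \<in> S" and w: "w \<in> V - S" and forced: "nbhd V E u - S = {w}"
    and S': "S' = insert w S"
    unfolding zf_step_def by blast
  have "w \<notin> F"
  proof
    assume "w \<in> F"
    have "nbhd V E u \<inter> F \<subseteq> nbhd V E u - S" using step.IH by blast
    with forced \<open>w \<in> F\<close> have "nbhd V E u \<inter> F = {w}" by blast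
    then have "card (nbhd V E u \<inter> F) = 1" by simp
    moreover have "u \<in> V - F" using u step by blast
    ultimately show False using assms(1) unfolding fort_def by blast
  qed
  then show ?case using w S' step by blast
qed

lemma zero_forcing_set_meets_fort:
  assumes "zero_forcing_set V E B" and "fort V E F"
  shows "F \<inter> B \<noteq> {}"
proof
  assume "F \<inter> B = {}"
  with assms(1) have "B \<subseteq> V - F" and "(zf_step V E)\<^sup>*\<^sup>* B V"
    unfolding zero_forcing_set_def by blast+
  then have "V \<subseteq> V - F" by (rule zf_steps_avoid_fort[OF assms(2), rotated])
  with assms(2) show False unfolding fort_def by blast
qed

lemma stalled_complement_is_fort:
  assumes "S \<subset> V" and stalled: "\<And>S'. \<not> zf_step V E S S'"
  shows "fort V E (V - S)"
  unfolding fort_def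
proof (intro conjI ballI)
  fix x assume x: "x \<in> V - (V - S)"
  show "card (nbhd V E x \<inter> (V - S)) \<noteq> 1"
  proof
    assume "card (nbhd V E x \<inter> (V - S)) = 1"
    then obtain w where w: "nbhd V E x \<inter> (V - S) = {w}" by (auto simp: card_Suc_eq)
    then have "nbhd V E x - S = {w}" unfolding nbhd_def by blast
    with x w have "zf_step V E S (insert w S)" unfolding zf_step_def by blast
    with stalled show False by blast
  qed
qed (use assms(1) in auto)

lemma meets_all_forts_imp_zero_forcing_set:
  assumes "simple_graph V E" and "B \<subseteq> V" and meets: "\<And>F. fort V E F \<Longrightarrow> F \<inter> B \<noteq> {}"
  shows "zero_forcing_set V E B"
proof -
  let ?R = "{S. (zf_step V E)\<^sup>*\<^sup>* B S \<and> S \<subseteq> V}"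
  have reachable_bounds: "B \<subseteq> S \<and> S \<subseteq> V" if "(zf_step V E)\<^sup>*\<^sup>* B S" for S
    using that by induction (use assms(2) in \<open>auto simp: zf_step_def\<close>)
  have "finite ?R"
    by (rule finite_subset[of _ "Pow V"]) (use assms(1) in \<open>auto simp: simple_graph_def\<close>)
  moreover have "B \<in> ?R" using assms(2) by blast
  ultimately obtain S where S: "S \<in> ?R" and maximal: "\<forall>S'\<in>?R. S \<subseteq> S' \<longrightarrow> S = S'"
    using finite_has_maximal[of ?R] by blast
  have "S = V"
  proof (rule ccontr)
    assume "S \<noteq> V"
    with S have "S \<subset> V" by blast
    moreover have "\<not> zf_step V E S S'" for S'
    proof
      assume step: "zf_step V E S S'"
      with S have "(zf_step V E)\<^sup>*\<^sup>* B S'" by auto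
      moreover have "S \<subset> S'" and "S' \<subseteq> V"
        using step S unfolding zf_step_def by auto
      ultimately show False using maximal by blast
    qed
    ultimately have "fort V E (V - S)" by (rule stalled_complement_is_fort)
    with meets reachable_bounds S show False by blast
  qed
  with S assms(2) show ?thesis unfolding zero_forcing_set_def by blast
qed

lemma zero_forcing_set_iff_meets_all_forts:
  assumes "simple_graph V E"
  shows "zero_forcing_set V E B \<longleftrightarrow> B \<subseteq> V \<and> (\<forall>F. fort V E F \<longrightarrow> F \<inter> B \<noteq> {})"
  using zero_forcing_set_meets_fort meets_all_forts_imp_zero_forcing_set[OF assms]
  unfolding zero_forcing_set_def by blast

lemma minimal_fort_member_in_minimal_zero_forcing_set:
  assumes g: "simple_graph V E" and F: "minimal_fort V E F" and "v \<in> F"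
  shows "\<exists>B. minimal_zero_forcing_set V E B \<and> v \<in> B"
proof -
  let ?T = "(V - F) \<union> {v}"
  have "zero_forcing_set V E ?T"
    unfolding zero_forcing_set_iff_meets_all_forts[OF g]
  proof (intro conjI allI impI)
    show "?T \<subseteq> V" using F \<open>v \<in> F\<close> unfolding minimal_fort_def fort_def by blast
    fix F' assume F': "fort V E F'"
    show "F' \<inter> ?T \<noteq> {}"
    proof (cases "F' \<subseteq> F")
      case True
      with F F' have "F' = F" unfolding minimal_fort_def by blast
      with \<open>v \<in> F\<close> show ?thesis by blast
    next
      case False
      with F' show ?thesis unfolding fort_def by blast
    qed
  qed
  then obtain B where B: "B \<subseteq> ?T" "minimal_zero_forcing_set V E B"
    using zero_forcing_set_has_minimal[OF g] by blast
  moreover from B have "zero_forcing_set V E B"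
    unfolding minimal_zero_forcing_set_def by blast
  moreover from F have "fort V E F"
    unfolding minimal_fort_def by blast
  ultimately have "F \<inter> B \<noteq> {}"
    using zero_forcing_set_meets_fort by blast
  with B have "v \<in> B" by blast
  with B show ?thesis by blast
qed

lemma minimal_zero_forcing_set_member_in_minimal_fort:
  assumes g: "simple_graph V E" and B: "minimal_zero_forcing_set V E B" and "v \<in> B"
  shows "\<exists>F. minimal_fort V E F \<and> v \<in> F"
proof -
  have "\<not> zero_forcing_set V E (B - {v})" and "B \<subseteq> V"
    using B \<open>v \<in> B\<close> unfolding minimal_zero_forcing_set_def zero_forcing_set_def by blast+
  then obtain F where F: "fort V E F" "F \<inter> (B - {v}) = {}"
    using zero_forcing_set_iff_meets_all_forts[OF g, of "B - {v}"] by blast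
  obtain F' where F': "F' \<subseteq> F" "minimal_fort V E F'"
    using fort_has_minimal_fort[OF g F(1)] by blast
  moreover from B have "zero_forcing_set V E B"
    unfolding minimal_zero_forcing_set_def by blast
  moreover from F' have "fort V E F'"
    unfolding minimal_fort_def by blast
  ultimately have "F' \<inter> B \<noteq> {}"
    using zero_forcing_set_meets_fort by blast
  with F F' have "v \<in> F'" by blast
  with F' show ?thesis by blast
qed

theorem proposition1p6:
  fixes V :: "'a set" and E :: "'a \<Rightarrow> 'a \<Rightarrow> bool" and v :: 'a
  assumes "simple_graph V E" and "v \<in> V"
  shows "Z_irrelevant V E v \<longleftrightarrow> \<not> (\<exists>F. minimal_fort V E F \<and> v \<in> F)"
  unfolding Z_irrelevant_def
  using minimal_fort_member_in_minimal_zero_forcing_set[OF assms(1)]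
    minimal_zero_forcing_set_member_in_minimal_fort[OF assms(1)]
  by metis

end
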